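(* Let $(\mathcal Q,d)$ be a Hadamard space, $Y$ a $\mathcal Q$-valued random variable and $o\in\mathcal Q$; consider the Fréchet median set $M:=\arg\min_{q\in\mathcal Q}\mathbb E[d(Y,q)-d(Y,o)]$. (i) Suppose there is no Borel set $U\subset\mathcal Q$ with $\mathbb P(Y\in U)=1$ that is contained in the union of the images of a family of geodesics all of whose images contain a common geodesic segment of positive length. Then $M$ consists of exactly one point. (ii) Suppose moreover that $(\mathcal Q,d)$ is non-branching and that there is no geodesic $\gamma$ with $\mathbb P(Y\in\gamma(I_\gamma))=1$. Then $M$ consists of exactly one point.
   Context: A Hadamard space is a complete metric space $(\mathcal Q,d)$ such that for all $y_0,y_1$ there is $m$ with $\frac12 d(y_0,q)^2+\frac12 d(y_1,q)^2-\frac14 d(y_0,y_1)^2\ge d(q,m)^2$ for all $q$. A geodesic is a map $\gamma:I_\gamma\to\mathcal Q$ on an interval with $d(\gamma(r),\gamma(t))=d(\gamma(r),\gamma(s))+d(\gamma(s),\gamma(t))$ for $r<s<t$; a geodesic segment is a closed bounded set that is the image of a geodesic. A geodesic space is non-branching if whenever $y,p,q\in\mathcal Q$ and unit-speed geodesics $\gamma_{y\to p},\gamma_{y\to q}$ from $y$ to $p$ and from $y$ to $q$ satisfy $\gamma_{y\to p}(d(y,p)/2)=\gamma_{y\to q}(d(y,q)/2)$, then $p=q$. *)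

theory Defs
  imports "HOL-Probability.Probability"
begin

text \<open>Hadamard space condition (completeness is provided by the type class complete_space).\<close>
definition hadamard :: "'a::complete_space itself \<Rightarrow> bool" where
  "hadamard _ \<longleftrightarrow> (\<forall>y0 y1::'a. \<exists>m. \<forall>q.
      (1/2) * (dist y0 q)\<^sup>2 + (1/2) * (dist y1 q)\<^sup>2 - (1/4) * (dist y0 y1)\<^sup>2 \<ge> (dist q m)\<^sup>2)"

definition geodesic :: "real set \<Rightarrow> (real \<Rightarrow> 'a::metric_space) \<Rightarrow> bool" where
  "geodesic I \<gamma> \<longleftrightarrow> is_interval I \<and>
     (\<forall>r\<in>I. \<forall>s\<in>I. \<forall>t\<in>I. r < s \<and> s < t \<longrightarrow>
        dist (\<gamma> r) (\<gamma> t) = dist (\<gamma> r) (\<gamma> s) + dist (\<gamma> s) (\<gamma> t))"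

definition geodesic_segment :: "'a::metric_space set \<Rightarrow> bool" where
  "geodesic_segment S \<longleftrightarrow> closed S \<and> bounded S \<and> (\<exists>I \<gamma>. geodesic I \<gamma> \<and> S = \<gamma> ` I)"

definition unit_geodesic_from_to :: "(real \<Rightarrow> 'a::metric_space) \<Rightarrow> 'a \<Rightarrow> 'a \<Rightarrow> bool" where
  "unit_geodesic_from_to \<gamma> y p \<longleftrightarrow> \<gamma> 0 = y \<and> \<gamma> (dist y p) = p \<and>
     (\<forall>s\<in>{0..dist y p}. \<forall>t\<in>{0..dist y p}. dist (\<gamma> s) (\<gamma> t) = \<bar>s - t\<bar>)"

definition non_branching :: "'a::metric_space itself \<Rightarrow> bool" where
  "non_branching _ \<longleftrightarrow> (\<forall>(y::'a) p q \<gamma>1 \<gamma>2.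
      unit_geodesic_from_to \<gamma>1 y p \<and> unit_geodesic_from_to \<gamma>2 y q \<and>
      \<gamma>1 (dist y p / 2) = \<gamma>2 (dist y q / 2) \<longrightarrow> p = q)"

definition frechet_median_set :: "'m measure \<Rightarrow> ('m \<Rightarrow> 'a::metric_space) \<Rightarrow> 'a \<Rightarrow> 'a set" where
  "frechet_median_set P Y x0 = {q. \<forall>p.
      prob_space.expectation P (\<lambda>\<omega>. dist (Y \<omega>) q - dist (Y \<omega>) x0)
      \<le> prob_space.expectation P (\<lambda>\<omega>. dist (Y \<omega>) p - dist (Y \<omega>) x0)}"

end

theory Submission
  imports Defs
begin

text \<open>
  In a Hadamard space the distance to a fixed point is convex along midpoints. Hence the
  Frechet function \<open>q \<mapsto> E[d(Y, q) - d(Y, o)]\<close> is midpoint convex, \<open>1\<close>-Lipschitz and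
  coercive, and it attains its minimum: points of its sublevel sets nearly closest to a base
  point form a Cauchy sequence by the parallelogram inequality.

  If \<open>q1 \<noteq> q2\<close> are two minimisers, then the convexity inequality
  \<open>d(Y, m) \<le> (d(Y, q1) + d(Y, q2)) / 2\<close> at their midpoint \<open>m\<close> is an almost sure equality, and its
  equality case forces \<open>\<bar>d(Y, q1) - d(Y, q2)\<bar> = d(q1, q2)\<close> almost surely: \<open>Y\<close> lies on one of the
  two rays extending the segment from \<open>q1\<close> to \<open>q2\<close>. These rays are covered by geodesics through
  \<open>q1\<close> and \<open>q2\<close>, which is excluded in (i); in a non-branching space they glue to a single
  geodesic, which is excluded in (ii).
\<close>

lemma Cauchy_if_dist_le_null:
  fixes X :: "nat \<Rightarrow> 'a::metric_space"
  assumes "\<epsilon> \<longlonglongrightarrow> 0" and "\<And>N m n. N \<le> m \<Longrightarrow> N \<le> n \<Longrightarrow> dist (X m) (X n) \<le> \<epsilon> N"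
  shows "Cauchy X"
proof (rule metric_CauchyI)
  fix e :: real assume "0 < e"
  then obtain N where "\<epsilon> N < e"
    using assms(1) by (metis (full_types) eventually_sequentially order_tendstoD(2) order_refl)
  then show "\<exists>N. \<forall>m\<ge>N. \<forall>n\<ge>N. dist (X m) (X n) < e"
    using assms(2) by (meson order.strict_trans1)
qed

lemma dist_split_eqI:
  fixes x y z :: "'a::metric_space"
  assumes "dist x z \<le> a" "dist z y \<le> b" "a + b \<le> dist x y"
  shows "dist x z = a" "dist z y = b"
  using dist_triangle[of x y z] assms by linarith+

text \<open>The identity \<open>t v\<^sup>2 + (1 - t) u\<^sup>2 = t (1 - t) (u + v)\<^sup>2 + ((1 - t) u - t v)\<^sup>2\<close> shows that the
  weighted squared distances to \<open>y\<close> and \<open>x\<close> are at least \<open>t (1 - t) (dist x y)\<^sup>2\<close>, with equality only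
  at the point dividing the segment in ratio \<open>t\<close>.\<close>

lemma dist_eq_if_weighted_sq_dist_le:
  fixes x y z :: "'a::metric_space"
  assumes t: "0 < t" "t < 1"
    and le: "t * (dist y z)\<^sup>2 + (1 - t) * (dist x z)\<^sup>2 \<le> t * (1 - t) * (dist x y)\<^sup>2"
  shows "dist x z = t * dist x y" "dist z y = (1 - t) * dist x y"
proof -
  define u v where "u = dist x z" and "v = dist z y"
  have tt: "0 < t * (1 - t)" using t by simp
  have "t * v\<^sup>2 + (1 - t) * u\<^sup>2 = t * (1 - t) * (u + v)\<^sup>2 + ((1 - t) * u - t * v)\<^sup>2"
    by (simp add: power2_eq_square algebra_simps)
  then have key: "t * (1 - t) * (u + v)\<^sup>2 + ((1 - t) * u - t * v)\<^sup>2 \<le> t * (1 - t) * (dist x y)\<^sup>2"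
    using le unfolding u_def v_def by (simp add: dist_commute)
  have triangle: "dist x y \<le> u + v"
    unfolding u_def v_def by (rule dist_triangle)
  then have "t * (1 - t) * (dist x y)\<^sup>2 \<le> t * (1 - t) * (u + v)\<^sup>2"
    using tt by (intro mult_left_mono power_mono) auto
  then have "((1 - t) * u - t * v)\<^sup>2 \<le> 0" and "t * (1 - t) * (u + v)\<^sup>2 \<le> t * (1 - t) * (dist x y)\<^sup>2"
    using key zero_le_power2[of "(1 - t) * u - t * v"] by linarith+
  then have "(1 - t) * u = t * v" and "(u + v)\<^sup>2 \<le> (dist x y)\<^sup>2"
    using tt by (simp_all add: mult_le_cancel_left_pos)
  then have "(1 - t) * u = t * v" and "u + v \<le> dist x y"
    by (auto intro: power2_le_imp_le)
  with triangle have "u + v = dist x y" and "u = t * (u + v)"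
    by (auto simp: algebra_simps)
  then show "dist x z = t * dist x y" "dist z y = (1 - t) * dist x y"
    unfolding u_def v_def by (simp_all add: algebra_simps)
qed

lemma dyadic_approximation:
  fixes t :: real
  assumes "0 \<le> t" "t \<le> 1"
  obtains k :: nat where "k \<le> 2 ^ n" "\<bar>real k / 2 ^ n - t\<bar> \<le> (1/2) ^ n"
proof
  define k where "k = nat \<lfloor>t * 2 ^ n\<rfloor>"
  have k: "real k = of_int \<lfloor>t * 2 ^ n\<rfloor>"
    unfolding k_def using assms by simp
  have "t * 2 ^ n \<le> 2 ^ n"
    using assms by simp
  then have "real k \<le> 2 ^ n"
    using k by linarith
  then show "k \<le> 2 ^ n"
    by (metis of_nat_le_iff of_nat_numeral of_nat_power)
  have "\<bar>real k - t * 2 ^ n\<bar> \<le> 1"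
    using k by linarith
  then have "\<bar>real k - t * 2 ^ n\<bar> / 2 ^ n \<le> 1 / 2 ^ n"
    by (simp add: divide_right_mono)
  moreover have "real k / 2 ^ n - t = (real k - t * 2 ^ n) / 2 ^ n"
    by (simp add: field_simps)
  ultimately show "\<bar>real k / 2 ^ n - t\<bar> \<le> (1/2) ^ n"
    by (simp add: power_divide)
qed

lemma doubling_induct:
  fixes c L :: real
  assumes "0 < c" "c \<le> L" "Q c"
    and step: "\<And>s s'. c \<le> s \<Longrightarrow> s \<le> s' \<Longrightarrow> s' \<le> 2 * s \<Longrightarrow> s' \<le> L \<Longrightarrow> Q s \<Longrightarrow> Q s'"
  shows "Q L"
proof -
  have "Q (min (2 ^ n * c) L)" for n
  proof (induction n)
    case 0
    then show ?case using assms by simp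
  next
    case (Suc n)
    have "c \<le> 2 ^ n * c"
      using assms(1) by simp
    then show ?case
      using assms(1,2) by (intro step[OF _ _ _ _ Suc.IH]) (auto simp: min_def)
  qed
  moreover obtain n where "L / c < 2 ^ n"
    using real_arch_pow[of 2 "L / c"] by auto
  then have "min (2 ^ n * c) L = L"
    using assms(1) by (simp add: field_simps)
  ultimately show ?thesis by metis
qed

lemma closed_image_dist_preserving:
  fixes f :: "'a::complete_space \<Rightarrow> 'b::complete_space"
  assumes "closed U" and isometric: "\<And>x y. x \<in> U \<Longrightarrow> y \<in> U \<Longrightarrow> dist (f x) (f y) = dist x y"
  shows "closed (f ` U)"
  unfolding complete_eq_closed[symmetric] complete_def
proof (intro allI impI)
  fix X assume X: "(\<forall>n. X n \<in> f ` U) \<and> Cauchy X"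
  then have "\<forall>n. \<exists>y. y \<in> U \<and> X n = f y"
    by blast
  then obtain x where x: "\<forall>n. x n \<in> U \<and> X n = f (x n)"
    by (metis choice)
  then have "dist (x m) (x n) = dist (X m) (X n)" for m n
    using isometric by simp
  then have "Cauchy x"
    using X unfolding Cauchy_def by simp
  then obtain l where l: "x \<longlonglongrightarrow> l"
    using Cauchy_convergent convergent_def by blast
  then have "l \<in> U"
    using \<open>closed U\<close> x closed_sequentially[of U x l] by blast
  have "(\<lambda>n. dist (x n) l) \<longlonglongrightarrow> 0"
    using l unfolding tendsto_dist_iff[of x] .
  moreover have "dist (X n) (f l) = dist (x n) l" for n
    using x isometric \<open>l \<in> U\<close> by simp
  ultimately have "X \<longlonglongrightarrow> f l"
    unfolding tendsto_dist_iff[of X] by simp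
  then show "\<exists>l\<in>f ` U. X \<longlonglongrightarrow> l"
    using \<open>l \<in> U\<close> by blast
qed

lemma closed_real_monotone_retraction:
  fixes A :: "real set"
  assumes "closed A"
  obtains I g where "is_interval I" "A \<subseteq> I" "g ` I \<subseteq> A" "mono_on I g" "\<And>a. a \<in> A \<Longrightarrow> g a = a"
proof
  define I where "I = {t. \<exists>a\<in>A. a \<le> t}"
  define g where "g t = Sup (A \<inter> {..t})" for t
  have bdd: "bdd_above (A \<inter> {..t})" for t
    by (rule bdd_aboveI[of _ t]) auto
  show "is_interval I"
    unfolding is_interval_1 I_def by (auto intro: order_trans)
  show "A \<subseteq> I"
    unfolding I_def by auto
  show "g ` I \<subseteq> A"
  proof
    fix u assume "u \<in> g ` I"
    then obtain t where "u = g t" "A \<inter> {..t} \<noteq> {}"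
      unfolding I_def by auto
    moreover have "closed (A \<inter> {..t})"
      using assms by (intro closed_Int) auto
    ultimately show "u \<in> A"
      unfolding g_def using closed_contains_Sup[of "A \<inter> {..t}"] bdd by auto
  qed
  show "mono_on I g"
    unfolding g_def I_def using bdd by (intro mono_onI cSup_subset_mono) auto
  show "g a = a" if "a \<in> A" for a
    unfolding g_def using that by (intro cSup_eq_maximum) auto
qed

lemma geodesic_image_if_isometric_to_real:
  fixes U :: "'a::complete_space set" and f :: "'a \<Rightarrow> real"
  assumes "closed U" and isometric: "\<And>y y'. y \<in> U \<Longrightarrow> y' \<in> U \<Longrightarrow> dist y y' = \<bar>f y - f y'\<bar>"
  obtains I \<gamma> where "geodesic I \<gamma>" "\<gamma> ` I = U"
proof -
  have "closed (f ` U)"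
    using assms by (intro closed_image_dist_preserving) (auto simp: dist_real_def)
  then obtain I g where I: "is_interval I" "f ` U \<subseteq> I" and g: "g ` I \<subseteq> f ` U" "mono_on I g"
    and g_id: "\<And>a. a \<in> f ` U \<Longrightarrow> g a = a"
    by (rule closed_real_monotone_retraction) blast
  define \<gamma> where "\<gamma> t = (SOME y. y \<in> U \<and> f y = g t)" for t
  have \<gamma>: "\<gamma> t \<in> U \<and> f (\<gamma> t) = g t" if "t \<in> I" for t
  proof -
    have "g t \<in> f ` U"
      using g(1) that by blast
    then have "\<exists>y. y \<in> U \<and> f y = g t"
      by auto
    then show ?thesis
      unfolding \<gamma>_def by (rule someI_ex)
  qed
  have "geodesic I \<gamma>"
    unfolding geodesic_def
  proof (intro conjI ballI impI I)
    fix r s t assume rst: "r \<in> I" "s \<in> I" "t \<in> I" "r < s \<and> s < t"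
    then have "g r \<le> g s" "g s \<le> g t"
      using g(2) by (auto simp: mono_on_def)
    then show "dist (\<gamma> r) (\<gamma> t) = dist (\<gamma> r) (\<gamma> s) + dist (\<gamma> s) (\<gamma> t)"
      using rst isometric \<gamma> by simp
  qed
  moreover have "\<gamma> ` I = U"
  proof (intro subset_antisym image_subsetI subsetI)
    show "\<gamma> t \<in> U" if "t \<in> I" for t
      using \<gamma>[OF that] by blast
    fix y assume "y \<in> U"
    then have "f y \<in> I" and "\<gamma> (f y) \<in> U" "f (\<gamma> (f y)) = f y"
      using I(2) \<gamma> g_id by auto
    then have "dist y (\<gamma> (f y)) = 0"
      using isometric[OF \<open>y \<in> U\<close>] by simp
    then have "y = \<gamma> (f y)"
      by simp
    then show "y \<in> \<gamma> ` I"
      using \<open>f y \<in> I\<close> by blast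
  qed
  ultimately show ?thesis
    using that by blast
qed

section \<open>Rays beyond a segment\<close>

definition rays_beyond :: "'a::metric_space \<Rightarrow> 'a \<Rightarrow> 'a set" where
  "rays_beyond q1 q2 = {y. \<bar>dist y q1 - dist y q2\<bar> = dist q1 q2}"

lemma closed_rays_beyond: "closed (rays_beyond q1 q2)"
  unfolding rays_beyond_def by (intro closed_Collect_eq continuous_intros)

lemma mem_rays_beyond_iff:
  "y \<in> rays_beyond q1 q2 \<longleftrightarrow> dist q1 y = dist q1 q2 + dist q2 y \<or> dist q2 y = dist q2 q1 + dist q1 y"
  unfolding rays_beyond_def by (auto simp: dist_commute abs_if)

text \<open>On \<open>rays_beyond q1 q2\<close> this is the position on the line through \<open>q1\<close> and \<open>q2\<close>,
  with \<open>q1\<close> at the origin and \<open>q2\<close> on the positive side.\<close>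

definition ray_coordinate :: "'a::metric_space \<Rightarrow> 'a \<Rightarrow> 'a \<Rightarrow> real" where
  "ray_coordinate q1 q2 y = (if dist q1 y = dist q1 q2 + dist q2 y then dist q1 y else - dist q1 y)"

lemma zero_less_diameter_doubleton:
  fixes a b :: "'a::metric_space"
  assumes "a \<noteq> b"
  shows "0 < diameter {a, b}"
proof -
  have "0 < dist a b"
    using assms by simp
  also have "dist a b \<le> diameter {a, b}"
    by (rule diameter_bounded_bound) auto
  finally show ?thesis .
qed

text \<open>Geodesics need not be continuous here, so three points with additive distances
  already form the image of a geodesic.\<close>

definition three_point_path :: "'a \<Rightarrow> 'a \<Rightarrow> 'a \<Rightarrow> real \<Rightarrow> 'a" where
  "three_point_path a b e t = (if t < 0 then a else if t < 1 then b else e)"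

lemma range_three_point_path: "range (three_point_path a b e) = {a, b, e}"
proof -
  have "three_point_path a b e (-1) = a" "three_point_path a b e 0 = b" "three_point_path a b e 1 = e"
    by (simp_all add: three_point_path_def)
  then have "{a, b, e} \<subseteq> range (three_point_path a b e)"
    by (metis empty_subsetI insert_subset rangeI)
  moreover have "range (three_point_path a b e) \<subseteq> {a, b, e}"
    by (auto simp: three_point_path_def)
  ultimately show ?thesis
    by (rule subset_antisym[rotated])
qed

lemma geodesic_three_point_path:
  fixes a b e :: "'a::metric_space"
  assumes "dist a e = dist a b + dist b e"
  shows "geodesic UNIV (three_point_path a b e)"
  unfolding geodesic_def three_point_path_def
  using assms by (auto simp: dist_commute)

lemma geodesic_segment_doubleton: "geodesic_segment {a, b :: 'a::metric_space}"
  unfolding geodesic_segment_def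
proof (intro conjI exI)
  show "closed {a, b}" "bounded {a, b}"
    by simp_all
  show "geodesic UNIV (three_point_path a b b)"
    by (rule geodesic_three_point_path) simp
  show "{a, b} = three_point_path a b b ` UNIV"
    using range_three_point_path[of a b b] by simp
qed

lemma rays_beyond_covered_by_geodesics:
  fixes q1 q2 :: "'a::metric_space"
  assumes "q1 \<noteq> q2"
  obtains S and \<Gamma> :: "(real set \<times> (real \<Rightarrow> 'a)) set"
  where "geodesic_segment S" "0 < diameter S" "\<forall>(I, \<gamma>) \<in> \<Gamma>. geodesic I \<gamma> \<and> S \<subseteq> \<gamma> ` I"
    "rays_beyond q1 q2 \<subseteq> (\<Union>(I, \<gamma>) \<in> \<Gamma>. \<gamma> ` I)"
proof -
  define \<Gamma> :: "(real set \<times> (real \<Rightarrow> 'a)) set" where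
    "\<Gamma> = {(UNIV, three_point_path a b y) |a b y. {a, b} = {q1, q2} \<and> dist a y = dist a b + dist b y}"
  have "\<forall>(I, \<gamma>) \<in> \<Gamma>. geodesic I \<gamma> \<and> {q1, q2} \<subseteq> \<gamma> ` I"
  proof
    fix x assume "x \<in> \<Gamma>"
    then obtain a b y where x: "x = (UNIV, three_point_path a b y)"
      and ab: "{a, b} = {q1, q2}" and aby: "dist a y = dist a b + dist b y"
      unfolding \<Gamma>_def by blast
    have "{q1, q2} \<subseteq> range (three_point_path a b y)"
      unfolding range_three_point_path ab[symmetric] by blast
    then show "case x of (I, \<gamma>) \<Rightarrow> geodesic I \<gamma> \<and> {q1, q2} \<subseteq> \<gamma> ` I"
      using geodesic_three_point_path[OF aby] x by simp
  qed
  moreover have "rays_beyond q1 q2 \<subseteq> (\<Union>(I, \<gamma>) \<in> \<Gamma>. \<gamma> ` I)"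
  proof
    fix y assume "y \<in> rays_beyond q1 q2"
    then obtain a b where "{a, b} = {q1, q2}" "dist a y = dist a b + dist b y"
      unfolding mem_rays_beyond_iff by blast
    then have "(UNIV, three_point_path a b y) \<in> \<Gamma>" and "y \<in> range (three_point_path a b y)"
      unfolding \<Gamma>_def range_three_point_path by auto
    then show "y \<in> (\<Union>(I, \<gamma>) \<in> \<Gamma>. \<gamma> ` I)"
      by blast
  qed
  ultimately show ?thesis
    by (rule that[OF geodesic_segment_doubleton zero_less_diameter_doubleton[OF assms]])
qed

section \<open>Midpoints and geodesics in Hadamard spaces\<close>

definition hmidpoint :: "'a::metric_space \<Rightarrow> 'a \<Rightarrow> 'a" where
  "hmidpoint x y = (SOME m. \<forall>q.
     (dist q m)\<^sup>2 \<le> (1/2) * (dist x q)\<^sup>2 + (1/2) * (dist y q)\<^sup>2 - (1/4) * (dist x y)\<^sup>2)"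

definition geodesic_path :: "'a::metric_space \<Rightarrow> 'a \<Rightarrow> real \<Rightarrow> 'a" where
  "geodesic_path x y s = (SOME z. dist x z = s \<and> dist z y = dist x y - s)"

context
  assumes hadamard: "hadamard TYPE('a::complete_space)"
begin

lemma hmidpoint_sq_dist_le:
  fixes x y q :: 'a
  shows "(dist q (hmidpoint x y))\<^sup>2 \<le> (1/2) * (dist x q)\<^sup>2 + (1/2) * (dist y q)\<^sup>2 - (1/4) * (dist x y)\<^sup>2"
proof -
  obtain m :: 'a where "\<forall>q. (dist q m)\<^sup>2 \<le> (1/2) * (dist x q)\<^sup>2 + (1/2) * (dist y q)\<^sup>2 - (1/4) * (dist x y)\<^sup>2"
    using hadamard unfolding hadamard_def by blast
  then show ?thesis
    unfolding hmidpoint_def by (rule someI[where P = "\<lambda>m. \<forall>q. _ m q", THEN spec])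
qed

lemma dist_hmidpoint_le:
  fixes x y q :: 'a
  shows "dist q (hmidpoint x y) \<le> (dist q x + dist q y) / 2"
proof -
  have "(dist x q - dist y q)\<^sup>2 \<le> (dist x y)\<^sup>2"
    using abs_dist_diff_le[of x q y] by (metis abs_ge_zero dist_commute power2_abs power_mono)
  then have "(dist q (hmidpoint x y))\<^sup>2 \<le> ((dist q x + dist q y) / 2)\<^sup>2"
    using hmidpoint_sq_dist_le[of q x y] by (simp add: dist_commute power2_eq_square field_simps)
  then show ?thesis
    by (rule power2_le_imp_le) simp
qed

lemma dist_hmidpoint_left: "dist x (hmidpoint x y) = dist x y / 2"
  and dist_hmidpoint_right: "dist (hmidpoint x y) y = dist x y / 2"
  for x y :: 'a
proof -
  have "dist x (hmidpoint x y) \<le> dist x y / 2" "dist y (hmidpoint x y) \<le> dist x y / 2"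
    using dist_hmidpoint_le[of x x y] dist_hmidpoint_le[of y x y] by (simp_all add: dist_commute)
  moreover have "dist x y \<le> dist x (hmidpoint x y) + dist y (hmidpoint x y)"
    by (metis dist_commute dist_triangle)
  ultimately show "dist x (hmidpoint x y) = dist x y / 2" "dist (hmidpoint x y) y = dist x y / 2"
    by (simp_all add: dist_commute)
qed

lemma abs_dist_diff_eq_if_dist_hmidpoint_eq:
  fixes y a b :: 'a
  assumes "dist y (hmidpoint a b) = (dist y a + dist y b) / 2"
  shows "\<bar>dist y a - dist y b\<bar> = dist a b"
proof -
  have "(dist a b)\<^sup>2 \<le> \<bar>dist y a - dist y b\<bar>\<^sup>2"
    using hmidpoint_sq_dist_le[of y a b] assms by (simp add: dist_commute power2_eq_square field_simps)
  then have "dist a b \<le> \<bar>dist y a - dist y b\<bar>"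
    by (rule power2_le_imp_le) simp
  moreover have "\<bar>dist y a - dist y b\<bar> \<le> dist a b"
    using abs_dist_diff_le[of a y b] by (simp add: dist_commute)
  ultimately show ?thesis by linarith
qed

text \<open>Points of \<open>C n\<close> almost closest to \<open>c\<close> form a Cauchy sequence: their midpoints stay
  in \<open>C n\<close>, so the parallelogram inequality bounds their distances by the gap between
  \<open>(dist c z)\<^sup>2\<close> and its infimum over \<open>C n\<close>.\<close>

lemma hadamard_nested_convex_Cauchy:
  fixes C :: "nat \<Rightarrow> 'a set" and c :: 'a
  assumes dec: "decseq C" and ne: "\<And>n. C n \<noteq> {}"
    and convex: "\<And>n a b. a \<in> C n \<Longrightarrow> b \<in> C n \<Longrightarrow> hmidpoint a b \<in> C n"
    and bounded: "\<And>z. z \<in> C 0 \<Longrightarrow> dist c z \<le> B"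
  obtains z where "\<And>n. z n \<in> C n" and "Cauchy z"
proof -
  define r where "r n = Inf ((\<lambda>z. (dist c z)\<^sup>2) ` C n)" for n
  have bdd: "bdd_below ((\<lambda>z. (dist c z)\<^sup>2) ` C n)" for n
    by (rule bdd_belowI[of _ 0]) auto
  have r_le: "r n \<le> (dist c z)\<^sup>2" if "z \<in> C n" for z n
    unfolding r_def using bdd that by (auto intro: cInf_lower)
  have "incseq r"
    unfolding r_def using dec ne bdd by (intro monoI cInf_superset_mono) (auto simp: decseq_def)
  moreover have "r n \<le> B\<^sup>2" for n
  proof -
    obtain z where z: "z \<in> C n" using ne by blast
    then have "dist c z \<le> B" using bounded dec by (auto simp: decseq_def)
    then show ?thesis using r_le[OF z] by (smt (verit) power_mono zero_le_dist)
  qed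
  ultimately obtain R where r_lim: "r \<longlonglongrightarrow> R" and r_le_R: "\<And>n. r n \<le> R"
    using LIMSEQ_incseq_SUP[of r] incseq_le by (metis bdd_aboveI2)
  have "\<exists>z. z \<in> C n \<and> (dist c z)\<^sup>2 < r n + inverse (Suc n)" for n
  proof -
    have "Inf ((\<lambda>z. (dist c z)\<^sup>2) ` C n) < r n + inverse (Suc n)"
      unfolding r_def by simp
    then show ?thesis
      using ne[of n] cInf_lessD[of "(\<lambda>z. (dist c z)\<^sup>2) ` C n"] by blast
  qed
  then obtain z where zC: "\<And>n. z n \<in> C n" and z_near: "\<And>n. (dist c (z n))\<^sup>2 < r n + inverse (Suc n)"
    by metis
  define \<delta> where "\<delta> N = 4 * (R - r N + inverse (Suc N))" for N
  have sq_le: "(dist (z m) (z n))\<^sup>2 \<le> \<delta> N" if "N \<le> m" "N \<le> n" for N m n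
  proof -
    have inv: "inverse (Suc k) \<le> inverse (Suc N)" if "N \<le> k" for k :: nat
      using that by (simp add: le_imp_inverse_le)
    have "z m \<in> C N" "z n \<in> C N" using zC dec that by (auto simp: decseq_def)
    then have "r N \<le> (dist c (hmidpoint (z m) (z n)))\<^sup>2"
      using convex r_le by blast
    also have "\<dots> \<le> (1/2) * (dist c (z m))\<^sup>2 + (1/2) * (dist c (z n))\<^sup>2 - (1/4) * (dist (z m) (z n))\<^sup>2"
      using hmidpoint_sq_dist_le by (simp add: dist_commute)
    finally show ?thesis
      unfolding \<delta>_def using z_near[of m] z_near[of n] r_le_R[of m] r_le_R[of n] inv[OF that(1)] inv[OF that(2)]
      by argo
  qed
  have "(\<lambda>N. sqrt (\<delta> N)) \<longlonglongrightarrow> sqrt (4 * (R - R + 0))"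
    unfolding \<delta>_def by (intro tendsto_intros r_lim LIMSEQ_inverse_real_of_nat)
  moreover have "dist (z m) (z n) \<le> sqrt (\<delta> N)" if "N \<le> m" "N \<le> n" for N m n
    using sq_le[OF that] by (simp add: real_le_rsqrt)
  ultimately have "Cauchy z"
    by (intro Cauchy_if_dist_le_null[of "\<lambda>N. sqrt (\<delta> N)"]) simp_all
  with zC show ?thesis using that by blast
qed

lemma hadamard_attains_min:
  fixes f :: "'a \<Rightarrow> real" and c :: 'a
  assumes cont: "continuous_on UNIV f"
    and quasiconvex: "\<And>a b. f (hmidpoint a b) \<le> max (f a) (f b)"
    and bdd: "\<And>z. L \<le> f z"
    and coercive: "\<And>K. \<exists>B. \<forall>z. f z \<le> K \<longrightarrow> dist c z \<le> B"
  obtains z where "\<And>q. f z \<le> f q"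
proof -
  define m where "m = Inf (range f)"
  have "bdd_below (range f)"
    using bdd by (intro bdd_belowI[of _ L]) auto
  then have m_le: "m \<le> f z" for z
    unfolding m_def by (auto intro: cInf_lower)
  define C where "C n = {z. f z \<le> m + inverse (Suc n)}" for n
  have "decseq C"
    unfolding C_def decseq_def by (auto elim!: order_trans simp: le_imp_inverse_le)
  moreover have "C n \<noteq> {}" for n
  proof -
    have "Inf (range f) < m + inverse (Suc n)"
      unfolding m_def by simp
    then show ?thesis
      unfolding C_def using cInf_lessD[of "range f"] by (fastforce intro: less_imp_le)
  qed
  moreover have "hmidpoint a b \<in> C n" if "a \<in> C n" "b \<in> C n" for a b n
    using quasiconvex[of a b] that unfolding C_def by auto
  moreover obtain B where "\<And>z. z \<in> C 0 \<Longrightarrow> dist c z \<le> B"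
    using coercive[of "m + 1"] unfolding C_def by auto
  ultimately obtain z where zC: "\<And>n. z n \<in> C n" and "Cauchy z"
    using hadamard_nested_convex_Cauchy by metis
  then obtain z\<^sub>0 where z_lim: "z \<longlonglongrightarrow> z\<^sub>0"
    using Cauchy_convergent convergent_def by blast
  have "(\<lambda>n. f (z n)) \<longlonglongrightarrow> f z\<^sub>0"
    using cont z_lim by (intro continuous_on_tendsto_compose[of UNIV f]) auto
  moreover have "(\<lambda>n. m + inverse (Suc n)) \<longlonglongrightarrow> m + 0"
    by (intro tendsto_intros LIMSEQ_inverse_real_of_nat)
  ultimately have "f z\<^sub>0 \<le> m"
    using zC unfolding C_def by (intro LIMSEQ_le) auto
  then show ?thesis
    using that m_le by (meson order_trans)
qed

lemma between_unique:
  fixes x y z z' :: 'a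
  assumes "dist x z = s" "dist z y = dist x y - s" "dist x z' = s" "dist z' y = dist x y - s"
  shows "z = z'"
proof (rule ccontr)
  assume "z \<noteq> z'"
  then have \<delta>: "0 < (dist z z')\<^sup>2 / 4" by simp
  define w where "w = hmidpoint z z'"
  have "(dist x w)\<^sup>2 \<le> s\<^sup>2 - (dist z z')\<^sup>2 / 4" "(dist y w)\<^sup>2 \<le> (dist x y - s)\<^sup>2 - (dist z z')\<^sup>2 / 4"
    using hmidpoint_sq_dist_le[of x z z'] hmidpoint_sq_dist_le[of y z z'] assms
    by (simp_all add: w_def dist_commute)
  then have "(dist x w)\<^sup>2 < s\<^sup>2" "(dist y w)\<^sup>2 < (dist x y - s)\<^sup>2"
    using \<delta> by linarith+
  moreover have "0 \<le> s" "0 \<le> dist x y - s"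
    using assms(1,2) zero_le_dist by metis+
  ultimately have "dist x w < s" "dist y w < dist x y - s"
    by (auto intro: power_less_imp_less_base)
  then show False
    using dist_triangle[of x y w] by (simp add: dist_commute)
qed

lemma dyadic_point_exists:
  fixes x y :: 'a
  assumes "k \<le> 2 ^ n"
  shows "\<exists>z. dist x z = real k / 2 ^ n * dist x y \<and> dist z y = (1 - real k / 2 ^ n) * dist x y"
  using assms
proof (induction n arbitrary: x y k)
  case 0
  then consider "k = 0" | "k = 1" by fastforce
  then show ?case
    by cases (auto intro: exI[of _ x] exI[of _ y])
next
  case (Suc n)
  define m where "m = hmidpoint x y"
  have m: "dist x m = dist x y / 2" "dist m y = dist x y / 2"
    unfolding m_def using dist_hmidpoint_left dist_hmidpoint_right by auto
  define a b where "a = real k / 2 ^ Suc n * dist x y" and "b = (1 - real k / 2 ^ Suc n) * dist x y"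
  have ab: "a + b = dist x y"
    unfolding a_def b_def by (simp add: algebra_simps)
  show ?case
  proof (cases "k \<le> 2 ^ n")
    case True
    then obtain z where z: "dist x z = real k / 2 ^ n * dist x m" "dist z m = (1 - real k / 2 ^ n) * dist x m"
      using Suc.IH by blast
    have "dist x z = a" "dist z m + dist m y = b"
      using z[unfolded m] unfolding a_def b_def m by (simp_all add: field_simps)
    then have "dist x z \<le> a" "dist z y \<le> b"
      using dist_triangle[of z y m] by simp_all
    then show ?thesis
      using dist_split_eqI[of x z a y b] ab unfolding a_def b_def by auto
  next
    case False
    then have k: "real k = real (k - 2 ^ n) + 2 ^ n"
      by (simp add: of_nat_diff)
    obtain z where z: "dist m z = real (k - 2 ^ n) / 2 ^ n * dist m y"
        "dist z y = (1 - real (k - 2 ^ n) / 2 ^ n) * dist m y"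
      using Suc.IH[of "k - 2 ^ n"] Suc.prems by fastforce
    have "dist x m + dist m z = a" "dist z y = b"
      using z[unfolded m] unfolding a_def b_def k m by (simp_all add: field_simps)
    then have "dist x z \<le> a" "dist z y \<le> b"
      using dist_triangle[of x z m] by simp_all
    then show ?thesis
      using dist_split_eqI[of x z a y b] ab unfolding a_def b_def by auto
  qed
qed

lemma weighted_sq_dist_attains_min:
  fixes x y :: 'a
  assumes t: "0 \<le> t" "t < 1"
  obtains z where "\<And>q. t * (dist y z)\<^sup>2 + (1 - t) * (dist x z)\<^sup>2 \<le> t * (dist y q)\<^sup>2 + (1 - t) * (dist x q)\<^sup>2"
proof -
  define h where "h z = t * (dist y z)\<^sup>2 + (1 - t) * (dist x z)\<^sup>2" for z
  have cont: "continuous_on UNIV h"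
    unfolding h_def by (intro continuous_intros)
  have quasiconvex: "h (hmidpoint a b) \<le> max (h a) (h b)" for a b
  proof -
    have "(dist q (hmidpoint a b))\<^sup>2 \<le> (1/2) * (dist q a)\<^sup>2 + (1/2) * (dist q b)\<^sup>2" for q
      using hmidpoint_sq_dist_le[of q a b] zero_le_power2[of "dist a b"]
      unfolding dist_commute[of q] by linarith
    then have "h (hmidpoint a b) \<le> t * ((1/2) * (dist y a)\<^sup>2 + (1/2) * (dist y b)\<^sup>2) + (1 - t) * ((1/2) * (dist x a)\<^sup>2 + (1/2) * (dist x b)\<^sup>2)"
      unfolding h_def using t by (intro add_mono mult_left_mono) auto
    also have "\<dots> = (h a + h b) / 2"
      unfolding h_def by (simp add: field_simps)
    finally show ?thesis by simp
  qed
  have nonneg: "0 \<le> h z" for z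
    unfolding h_def using t by simp
  have coercive: "\<exists>B. \<forall>z. h z \<le> K \<longrightarrow> dist x z \<le> B" for K
  proof (intro exI allI impI)
    fix z assume "h z \<le> K"
    moreover have "0 \<le> t * (dist y z)\<^sup>2"
      using t by simp
    ultimately have "(1 - t) * (dist x z)\<^sup>2 \<le> K"
      unfolding h_def by linarith
    then have "(dist x z)\<^sup>2 \<le> K / (1 - t)"
      using t by (simp add: field_simps)
    then show "dist x z \<le> sqrt (K / (1 - t))"
      by (simp add: real_le_rsqrt)
  qed
  show ?thesis
    using hadamard_attains_min[OF cont quasiconvex nonneg coercive] that unfolding h_def by blast
qed

text \<open>The division point is the minimiser of \<open>t (dist y z)\<^sup>2 + (1 - t) (dist x z)\<^sup>2\<close>; comparison with
  dyadic division points, obtained by repeated halving, shows that its minimum is \<open>t (1 - t) (dist x y)\<^sup>2\<close>.\<close>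

lemma between_exists:
  fixes x y :: 'a
  assumes "0 \<le> s" "s \<le> dist x y"
  obtains z where "dist x z = s" "dist z y = dist x y - s"
proof -
  consider "s = 0" | "s = dist x y" | "0 < s" "s < dist x y"
    using assms by linarith
  then show ?thesis
  proof cases
    case 1
    then show ?thesis using that[of x] by simp
  next
    case 2
    then show ?thesis using that[of y] by simp
  next
    case 3
    define D where "D = dist x y"
    define t where "t = s / D"
    have "0 < D"
      using 3 unfolding D_def by linarith
    then have t: "0 < t" "t < 1"
      using 3 by (simp_all add: t_def D_def)
    define h where "h z = t * (dist y z)\<^sup>2 + (1 - t) * (dist x z)\<^sup>2" for z
    obtain z where z_min: "\<And>q. h z \<le> h q"
      using weighted_sq_dist_attains_min[where t = t and x = x and y = y] t unfolding h_def by auto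
    have "h z \<le> t * (1 - t) * D\<^sup>2 + D\<^sup>2 * ((1/2) ^ n)\<^sup>2" for n
    proof -
      obtain k where "k \<le> 2 ^ n" and close: "\<bar>real k / 2 ^ n - t\<bar> \<le> (1/2) ^ n"
        using dyadic_approximation[of t] t by auto
      moreover define \<tau> where "\<tau> = real k / 2 ^ n"
      ultimately obtain w where w: "dist x w = \<tau> * D" "dist w y = (1 - \<tau>) * D"
        using dyadic_point_exists[of k n x y] unfolding D_def by blast
      have "h w = t * (1 - t) * D\<^sup>2 + D\<^sup>2 * (\<tau> - t)\<^sup>2"
        unfolding h_def dist_commute[of y] w by (simp add: power2_eq_square algebra_simps)
      also have "\<dots> \<le> t * (1 - t) * D\<^sup>2 + D\<^sup>2 * ((1/2) ^ n)\<^sup>2"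
        using power_mono[OF close abs_ge_zero, of 2] unfolding \<tau>_def by (simp add: mult_left_mono)
      finally show ?thesis
        using z_min[of w] by linarith
    qed
    moreover have "(\<lambda>n. t * (1 - t) * D\<^sup>2 + D\<^sup>2 * ((1/2) ^ n)\<^sup>2) \<longlonglongrightarrow> t * (1 - t) * D\<^sup>2 + D\<^sup>2 * 0\<^sup>2"
      by (intro tendsto_intros LIMSEQ_power_zero) simp
    ultimately have "h z \<le> t * (1 - t) * D\<^sup>2 + D\<^sup>2 * 0\<^sup>2"
      by (intro LIMSEQ_le_const) auto
    then have "dist x z = t * D" "dist z y = (1 - t) * D"
      using dist_eq_if_weighted_sq_dist_le[OF t] unfolding h_def D_def by simp_all
    then show ?thesis
      using that 3 \<open>0 < D\<close> by (simp add: t_def D_def algebra_simps)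
  qed
qed

lemma
  fixes x y :: 'a
  assumes "0 \<le> s" "s \<le> dist x y"
  shows dist_geodesic_path_left: "dist x (geodesic_path x y s) = s"
    and dist_geodesic_path_right: "dist (geodesic_path x y s) y = dist x y - s"
proof -
  obtain z where "dist x z = s \<and> dist z y = dist x y - s"
    using between_exists[OF assms] by blast
  then have "dist x (geodesic_path x y s) = s \<and> dist (geodesic_path x y s) y = dist x y - s"
    unfolding geodesic_path_def by (rule someI)
  then show "dist x (geodesic_path x y s) = s" "dist (geodesic_path x y s) y = dist x y - s"
    by auto
qed

lemma geodesic_path_eqI:
  fixes x y z :: 'a
  assumes "dist x z = s" "dist z y = dist x y - s"
  shows "geodesic_path x y s = z"
proof -
  have "0 \<le> s" "s \<le> dist x y"
    using assms zero_le_dist[of x z] zero_le_dist[of z y] by linarith+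
  then show ?thesis
    using between_unique[OF dist_geodesic_path_left dist_geodesic_path_right assms] by blast
qed

lemma geodesic_path_0: "geodesic_path x y 0 = x"
  and geodesic_path_dist: "geodesic_path x y (dist x y) = y"
  for x y :: 'a
  by (auto intro: geodesic_path_eqI)

lemma dist_geodesic_path:
  fixes x y :: 'a
  assumes "0 \<le> s" "s \<le> u" "u \<le> dist x y"
  shows "dist (geodesic_path x y s) (geodesic_path x y u) = u - s"
proof -
  define z where "z = geodesic_path x y u"
  have z: "dist x z = u" "dist z y = dist x y - u"
    unfolding z_def using assms by (auto intro: dist_geodesic_path_left dist_geodesic_path_right)
  define w where "w = geodesic_path x z s"
  have w: "dist x w = s" "dist w z = u - s"
    unfolding w_def using assms z by (auto intro: dist_geodesic_path_left dist_geodesic_path_right)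
  have "dist w y \<le> dist x y - s"
    using dist_triangle[of w y z] w z by linarith
  then have "geodesic_path x y s = w"
    using w(1) dist_split_eqI[of x w s y "dist x y - s"] by (intro geodesic_path_eqI) auto
  then show ?thesis
    using w(2) z_def by simp
qed

lemma geodesic_path_geodesic_path:
  fixes x y :: 'a
  assumes "0 \<le> r" "r \<le> s" "s \<le> dist x y"
  shows "geodesic_path x (geodesic_path x y s) r = geodesic_path x y r"
  using assms dist_geodesic_path[of r s x y] dist_geodesic_path_left[of s x y] dist_geodesic_path_left[of r x y]
  by (intro geodesic_path_eqI) auto

lemma hmidpoint_eq_geodesic_path: "hmidpoint x y = geodesic_path x y (dist x y / 2)"
  for x y :: 'a
  using dist_hmidpoint_left dist_hmidpoint_right
  by (intro geodesic_path_eqI[symmetric]) auto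

lemma unit_geodesic_from_to_geodesic_path: "unit_geodesic_from_to (geodesic_path x y) x y"
  for x y :: 'a
  unfolding unit_geodesic_from_to_def
proof (intro conjI ballI geodesic_path_0 geodesic_path_dist)
  fix s t assume "s \<in> {0..dist x y}" "t \<in> {0..dist x y}"
  then show "dist (geodesic_path x y s) (geodesic_path x y t) = \<bar>s - t\<bar>"
    using dist_geodesic_path[of s t x y] dist_geodesic_path[of t s x y]
    by (cases "s \<le> t") (auto simp: dist_commute)
qed

text \<open>In a non-branching space two geodesics from \<open>a\<close> through \<open>b\<close> agree on ever longer
  initial pieces: agreement up to \<open>s\<close> gives agreement of the midpoints of the pieces of length
  \<open>s' \<le> 2 s\<close>, hence of their endpoints.\<close>

lemma geodesic_path_eq_if_non_branching:
  fixes a b y y' :: 'a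
  assumes NB: "non_branching TYPE('a)" and "a \<noteq> b"
    and y: "dist a y = dist a b + dist b y" and y': "dist a y' = dist a b + dist b y'"
    and le: "dist a y \<le> dist a y'"
  shows "geodesic_path a y' (dist a y) = y"
proof -
  have "geodesic_path a y (dist a y) = geodesic_path a y' (dist a y)"
  proof (rule doubling_induct[where Q = "\<lambda>s. geodesic_path a y s = geodesic_path a y' s"])
    show "0 < dist a b" "dist a b \<le> dist a y"
      using \<open>a \<noteq> b\<close> y by auto
    show "geodesic_path a y (dist a b) = geodesic_path a y' (dist a b)"
      using y y' by (simp add: geodesic_path_eqI)
  next
    fix s s' assume s: "dist a b \<le> s" "s \<le> s'" "s' \<le> 2 * s" "s' \<le> dist a y"
      and IH: "geodesic_path a y s = geodesic_path a y' s"
    define p p' where "p = geodesic_path a y s'" and "p' = geodesic_path a y' s'"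
    have "dist a p = s'" "dist a p' = s'"
      unfolding p_def p'_def using s le zero_le_dist[of a b]
      by (auto intro!: dist_geodesic_path_left)
    then have "geodesic_path a p (dist a p / 2) = geodesic_path a y (s' / 2)"
      "geodesic_path a p' (dist a p' / 2) = geodesic_path a y' (s' / 2)"
      unfolding p_def p'_def using s le zero_le_dist[of a b]
      by (auto intro!: geodesic_path_geodesic_path)
    moreover have "geodesic_path a y (s' / 2) = geodesic_path a y' (s' / 2)"
      using geodesic_path_geodesic_path[of "s' / 2" s a y]
        geodesic_path_geodesic_path[of "s' / 2" s a y'] IH s le zero_le_dist[of a b]
      by auto
    ultimately have "geodesic_path a p (dist a p / 2) = geodesic_path a p' (dist a p' / 2)"
      by simp
    then have "p = p'"
      using NB unit_geodesic_from_to_geodesic_path[of a p]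
        unit_geodesic_from_to_geodesic_path[of a p'] unfolding non_branching_def by blast
    then show "geodesic_path a y s' = geodesic_path a y' s'"
      unfolding p_def p'_def .
  qed
  then show ?thesis
    using geodesic_path_dist by simp
qed

lemma dist_eq_abs_if_non_branching:
  fixes a b y y' :: 'a
  assumes "non_branching TYPE('a)" and "a \<noteq> b"
    and "dist a y = dist a b + dist b y" and "dist a y' = dist a b + dist b y'"
  shows "dist y y' = \<bar>dist a y - dist a y'\<bar>"
proof -
  have key: "dist y y' = dist a y' - dist a y"
    if "dist a y = dist a b + dist b y" "dist a y' = dist a b + dist b y'" "dist a y \<le> dist a y'"
    for y y'
    using geodesic_path_eq_if_non_branching[OF assms(1,2) that]
      dist_geodesic_path_right[of "dist a y" a y'] that(3) by simp
  show ?thesis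
  proof (cases "dist a y \<le> dist a y'")
    case True
    then show ?thesis
      using key[OF assms(3,4)] by simp
  next
    case False
    then show ?thesis
      using key[OF assms(4,3)] by (simp add: dist_commute)
  qed
qed

text \<open>Along the geodesic from \<open>b\<close> to \<open>f\<close> the distance to \<open>a\<close> grows at unit rate up to \<open>e\<close>;
  convexity of the distance to \<open>a\<close> doubles the length of the piece on which it does.\<close>

lemma dist_add_extend:
  fixes a b e f :: 'a
  assumes "b \<noteq> e"
    and abe: "dist a e = dist a b + dist b e" and bef: "dist b f = dist b e + dist e f"
  shows "dist a f = dist a b + dist b f"
proof -
  have "dist a (geodesic_path b f (dist b f)) = dist a b + dist b f"
  proof (rule doubling_induct[where Q = "\<lambda>s. dist a (geodesic_path b f s) = dist a b + s"])
    show "0 < dist b e" "dist b e \<le> dist b f"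
      using \<open>b \<noteq> e\<close> bef by auto
    show "dist a (geodesic_path b f (dist b e)) = dist a b + dist b e"
      using abe bef by (simp add: geodesic_path_eqI)
  next
    fix s s' assume s: "dist b e \<le> s" "s \<le> s'" "s' \<le> 2 * s" "s' \<le> dist b f"
      and IH: "dist a (geodesic_path b f s) = dist a b + s"
    define p where "p = geodesic_path b f s'"
    have "0 \<le> s'"
      using s zero_le_dist[of b e] by linarith
    have "dist b p = s'"
      unfolding p_def using \<open>0 \<le> s'\<close> s by (intro dist_geodesic_path_left)
    have mid: "hmidpoint b p = geodesic_path b f (s' / 2)"
      unfolding hmidpoint_eq_geodesic_path \<open>dist b p = s'\<close> unfolding p_def
      using \<open>0 \<le> s'\<close> s
      by (intro geodesic_path_geodesic_path) auto
    have "dist (geodesic_path b f (s' / 2)) (geodesic_path b f s) = s - s' / 2"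
      using \<open>0 \<le> s'\<close> s by (intro dist_geodesic_path) auto
    then have "dist a b + s' / 2 \<le> dist a (hmidpoint b p)"
      unfolding mid using IH dist_triangle[of a "geodesic_path b f s" "geodesic_path b f (s' / 2)"] by linarith
    also have "\<dots> \<le> (dist a b + dist a p) / 2"
      by (rule dist_hmidpoint_le)
    finally have "dist a b + s' \<le> dist a p"
      by simp
    moreover have "dist a p \<le> dist a b + s'"
      using dist_triangle[of a p b] \<open>dist b p = s'\<close> by simp
    ultimately show "dist a (geodesic_path b f s') = dist a b + s'"
      unfolding p_def by simp
  qed
  then show ?thesis
    using geodesic_path_dist by simp
qed

lemma dist_eq_add_across_segment:
  fixes q1 q2 y y' :: 'a
  assumes "q1 \<noteq> q2"
    and y: "dist q1 y = dist q1 q2 + dist q2 y" and y': "dist q2 y' = dist q2 q1 + dist q1 y'"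
  shows "dist y y' = dist q1 y + dist q1 y'"
proof -
  have "dist y' q2 = dist y' q1 + dist q1 q2"
    using y' by (simp add: dist_commute)
  then have "dist y' y = dist y' q1 + dist q1 y"
    using dist_add_extend[OF \<open>q1 \<noteq> q2\<close>] y by blast
  then show ?thesis
    by (simp add: dist_commute)
qed

lemma dist_eq_abs_ray_coordinate:
  fixes q1 q2 y y' :: 'a
  assumes NB: "non_branching TYPE('a)" and "q1 \<noteq> q2"
    and rays: "y \<in> rays_beyond q1 q2" "y' \<in> rays_beyond q1 q2"
  shows "dist y y' = \<bar>ray_coordinate q1 q2 y - ray_coordinate q1 q2 y'\<bar>"
proof -
  define forward where "forward y \<longleftrightarrow> dist q1 y = dist q1 q2 + dist q2 y" for y
  define backward where "backward y \<longleftrightarrow> dist q2 y = dist q2 q1 + dist q1 y" for y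
  have not_both: "\<not> (forward y \<and> backward y)" for y
    using \<open>q1 \<noteq> q2\<close> dist_commute[of q1 q2] unfolding forward_def backward_def by force
  have coordinate: "ray_coordinate q1 q2 y = (if forward y then dist q1 y else - dist q1 y)" for y
    unfolding ray_coordinate_def forward_def ..
  consider "forward y" "forward y'" | "backward y" "backward y'" | "forward y" "backward y'"
    | "backward y" "forward y'"
    using rays unfolding mem_rays_beyond_iff forward_def backward_def by blast
  then show ?thesis
  proof cases
    case 1
    then show ?thesis
      using dist_eq_abs_if_non_branching[OF NB \<open>q1 \<noteq> q2\<close>, of y y'] unfolding coordinate forward_def by simp
  next
    case 2
    then have "dist y y' = \<bar>dist q2 y - dist q2 y'\<bar>"
      using dist_eq_abs_if_non_branching[OF NB \<open>q1 \<noteq> q2\<close>[symmetric], of y y']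
      unfolding backward_def by simp
    then show ?thesis
      using 2 not_both unfolding coordinate backward_def by (auto simp: abs_minus_commute)
  next
    case 3
    then show ?thesis
      using dist_eq_add_across_segment[OF \<open>q1 \<noteq> q2\<close>, of y y'] not_both
      unfolding coordinate forward_def backward_def by auto
  next
    case 4
    then have "ray_coordinate q1 q2 y = - dist q1 y" "ray_coordinate q1 q2 y' = dist q1 y'"
      using not_both unfolding coordinate by auto
    moreover have "dist y y' = dist q1 y + dist q1 y'"
      using 4 dist_eq_add_across_segment[OF \<open>q1 \<noteq> q2\<close>, of y' y]
      unfolding forward_def backward_def by (simp add: dist_commute)
    ultimately show ?thesis
      using zero_le_dist[of q1 y] zero_le_dist[of q1 y'] by arith
  qed
qed

lemma rays_beyond_geodesic_image:
  fixes q1 q2 :: 'a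
  assumes "non_branching TYPE('a)" and "q1 \<noteq> q2"
  obtains I \<gamma> where "geodesic I \<gamma>" "\<gamma> ` I = rays_beyond q1 q2"
  using geodesic_image_if_isometric_to_real[OF closed_rays_beyond dist_eq_abs_ray_coordinate[OF assms]] that
  by blast

end

section \<open>The Frechet function\<close>

definition frechet_fun :: "'m measure \<Rightarrow> ('m \<Rightarrow> 'a::metric_space) \<Rightarrow> 'a \<Rightarrow> 'a \<Rightarrow> real" where
  "frechet_fun M Y x0 q = (\<integral>\<omega>. dist (Y \<omega>) q - dist (Y \<omega>) x0 \<partial>M)"

lemma frechet_median_set_altdef:
  "frechet_median_set M Y x0 = {q. \<forall>p. frechet_fun M Y x0 q \<le> frechet_fun M Y x0 p}"
  by (simp add: frechet_median_set_def frechet_fun_def)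

context prob_space
begin

context
  fixes Y :: "'a \<Rightarrow> 'b::metric_space" and x0 :: 'b
  assumes Y: "Y \<in> borel_measurable M"
begin

lemma borel_measurable_dist_right: "(\<lambda>\<omega>. dist (Y \<omega>) q) \<in> borel_measurable M"
  using Y by (intro borel_measurable_continuous_on[of "\<lambda>y. dist y q"]) (auto intro: continuous_intros)

lemma integrable_dist_diff: "integrable M (\<lambda>\<omega>. dist (Y \<omega>) q - dist (Y \<omega>) p)"
proof (rule integrable_const_bound)
  show "AE \<omega> in M. norm (dist (Y \<omega>) q - dist (Y \<omega>) p) \<le> dist q p"
    using abs_dist_diff_le[of q "Y _" p] by (simp add: dist_commute)
  show "(\<lambda>\<omega>. dist (Y \<omega>) q - dist (Y \<omega>) p) \<in> borel_measurable M"
    by (intro borel_measurable_diff borel_measurable_dist_right)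
qed

lemma frechet_fun_diff: "frechet_fun M Y x0 q - frechet_fun M Y x0 p = (\<integral>\<omega>. dist (Y \<omega>) q - dist (Y \<omega>) p \<partial>M)"
  unfolding frechet_fun_def using integrable_dist_diff[of q x0] integrable_dist_diff[of p x0]
  by (simp flip: Bochner_Integration.integral_diff)

lemma frechet_fun_diff_le: "frechet_fun M Y x0 q - frechet_fun M Y x0 p \<le> dist q p"
proof -
  have "dist (Y \<omega>) q - dist (Y \<omega>) p \<le> dist q p" for \<omega>
    using dist_triangle[of "Y \<omega>" q p] by (simp add: dist_commute)
  then have "(\<integral>\<omega>. dist (Y \<omega>) q - dist (Y \<omega>) p \<partial>M) \<le> (\<integral>\<omega>. dist q p \<partial>M)"
    using integrable_dist_diff by (intro integral_mono) auto
  then show ?thesis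
    by (simp add: frechet_fun_diff prob_space)
qed

lemma continuous_frechet_fun: "continuous_on UNIV (frechet_fun M Y x0)"
proof (rule lipschitz_on_continuous_on)
  show "1-lipschitz_on UNIV (frechet_fun M Y x0)"
  proof (intro lipschitz_onI)
    fix q p :: 'b
    show "dist (frechet_fun M Y x0 q) (frechet_fun M Y x0 p) \<le> 1 * dist q p"
      using frechet_fun_diff_le[of q p] frechet_fun_diff_le[of p q]
      by (simp add: dist_real_def abs_le_iff dist_commute)
  qed simp
qed

lemma ex_radius_prob_gt:
  obtains R where "0 \<le> R" "3/4 < prob {\<omega> \<in> space M. dist (Y \<omega>) x0 \<le> R}"
proof -
  let ?D = "distr M borel (\<lambda>\<omega>. dist (Y \<omega>) x0)"
  have rv: "random_variable borel (\<lambda>\<omega>. dist (Y \<omega>) x0)"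
    by (rule borel_measurable_dist_right)
  then interpret D: real_distribution ?D
    by simp
  have "\<forall>\<^sub>F R in at_top. 3/4 < cdf ?D R"
    using D.cdf_lim_at_top_prob by (rule order_tendstoD) simp
  then obtain R where "0 \<le> R" "3/4 < cdf ?D R"
    by (metis eventually_at_top_linorder nle_le)
  moreover have "cdf ?D R = prob {\<omega> \<in> space M. dist (Y \<omega>) x0 \<le> R}"
    unfolding cdf_def using rv
    by (simp add: measure_distr vimage_def Int_def conj_commute)
  ultimately show ?thesis
    using that by simp
qed

lemma frechet_fun_lower_bound:
  assumes "0 \<le> R" and R: "3/4 < prob {\<omega> \<in> space M. dist (Y \<omega>) x0 \<le> R}"
  shows "dist q x0 / 2 - 2 * R \<le> frechet_fun M Y x0 q"
proof -
  define D where "D = dist q x0"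
  define A where "A = {\<omega> \<in> space M. dist (Y \<omega>) x0 \<le> R}"
  have A: "A \<in> sets M"
    unfolding A_def using borel_measurable_dist_right by measurable
  have far: "- D \<le> dist (Y \<omega>) q - dist (Y \<omega>) x0" for \<omega>
    unfolding D_def using dist_triangle[of "Y \<omega>" x0 q] by linarith
  have near: "D - 2 * R \<le> dist (Y \<omega>) q - dist (Y \<omega>) x0" if "\<omega> \<in> A" for \<omega>
    unfolding D_def using that dist_triangle[of q x0 "Y \<omega>"] by (simp add: A_def dist_commute)
  show ?thesis
  proof (cases "D \<le> R")
    case True
    have "(\<integral>\<omega>. - D \<partial>M) \<le> frechet_fun M Y x0 q"
      unfolding frechet_fun_def using far integrable_dist_diff by (intro integral_mono) auto
    then show ?thesis
      using True \<open>0 \<le> R\<close> by (simp add: D_def prob_space)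
  next
    case False
    have int_A: "integrable M (indicator A :: 'a \<Rightarrow> real)"
      using A by (intro integrable_real_indicator) (simp_all add: emeasure_finite flip: less_top)
    have "(\<integral>\<omega>. - D + (2 * D - 2 * R) * indicator A \<omega> \<partial>M) \<le> frechet_fun M Y x0 q"
      unfolding frechet_fun_def
    proof (intro integral_mono integrable_dist_diff)
      show "integrable M (\<lambda>\<omega>. - D + (2 * D - 2 * R) * indicator A \<omega>)"
        using int_A by (intro Bochner_Integration.integrable_add integrable_mult_right) auto
      show "- D + (2 * D - 2 * R) * indicator A \<omega> \<le> dist (Y \<omega>) q - dist (Y \<omega>) x0" for \<omega>
        using far[of \<omega>] near[of \<omega>] by (cases "\<omega> \<in> A") auto
    qed
    moreover have "(\<integral>\<omega>. - D + (2 * D - 2 * R) * indicator A \<omega> \<partial>M) = - D + (2 * D - 2 * R) * prob A"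
      using A int_A by (subst Bochner_Integration.integral_add) (auto simp: prob_space)
    moreover have "(2 * D - 2 * R) * (3/4) \<le> (2 * D - 2 * R) * prob A"
      using False R unfolding A_def by (intro mult_left_mono) auto
    ultimately have "- D + (2 * D - 2 * R) * (3/4) \<le> frechet_fun M Y x0 q"
      by linarith
    then show ?thesis
      using \<open>0 \<le> R\<close> unfolding D_def by (simp add: algebra_simps)
  qed
qed

end

context
  fixes Y :: "'a \<Rightarrow> 'b::complete_space" and x0 :: 'b
  assumes hadamard: "hadamard TYPE('b)" and Y: "Y \<in> borel_measurable M"
begin

lemma frechet_fun_hmidpoint_le:
  "frechet_fun M Y x0 (hmidpoint a b) \<le> (frechet_fun M Y x0 a + frechet_fun M Y x0 b) / 2"
proof -
  define g where "g q \<omega> = dist (Y \<omega>) q - dist (Y \<omega>) x0" for q \<omega>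
  have int: "integrable M (g q)" for q
    unfolding g_def by (rule integrable_dist_diff[OF Y])
  have "g (hmidpoint a b) \<omega> \<le> (g a \<omega> + g b \<omega>) / 2" for \<omega>
    unfolding g_def using dist_hmidpoint_le[OF hadamard, of "Y \<omega>" a b] by simp
  then have "(\<integral>\<omega>. g (hmidpoint a b) \<omega> \<partial>M) \<le> (\<integral>\<omega>. (g a \<omega> + g b \<omega>) / 2 \<partial>M)"
    using int by (intro integral_mono integrable_divide Bochner_Integration.integrable_add) auto
  also have "\<dots> = ((\<integral>\<omega>. g a \<omega> \<partial>M) + (\<integral>\<omega>. g b \<omega> \<partial>M)) / 2"
    using int by simp
  finally show ?thesis
    unfolding frechet_fun_def g_def .
qed

lemma frechet_median_exists:
  obtains q where "q \<in> frechet_median_set M Y x0"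
proof -
  obtain R where R: "0 \<le> R" "3/4 < prob {\<omega> \<in> space M. dist (Y \<omega>) x0 \<le> R}"
    using ex_radius_prob_gt[OF Y] by blast
  note lower = frechet_fun_lower_bound[OF Y R]
  have "frechet_fun M Y x0 (hmidpoint a b) \<le> max (frechet_fun M Y x0 a) (frechet_fun M Y x0 b)" for a b
    using frechet_fun_hmidpoint_le[of a b] by (auto simp: max_def)
  moreover have "- 2 * R \<le> frechet_fun M Y x0 q" for q
    using lower[of q] zero_le_dist[of q x0] by linarith
  moreover have "\<exists>B. \<forall>q. frechet_fun M Y x0 q \<le> K \<longrightarrow> dist x0 q \<le> B" for K
  proof (intro exI allI impI)
    fix q assume "frechet_fun M Y x0 q \<le> K"
    then show "dist x0 q \<le> 2 * (K + 2 * R)"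
      using lower[of q] by (simp add: dist_commute)
  qed
  ultimately obtain q where "\<And>p. frechet_fun M Y x0 q \<le> frechet_fun M Y x0 p"
    using hadamard_attains_min[OF hadamard continuous_frechet_fun[OF Y]] by metis
  then show ?thesis
    using that unfolding frechet_median_set_altdef by blast
qed

text \<open>The Frechet function is convex along midpoints and minimal at both medians, so the pointwise
  convexity inequality for \<open>hmidpoint q1 q2\<close> is an almost sure equality.\<close>

lemma frechet_medians_ae_rays_beyond:
  assumes "q1 \<in> frechet_median_set M Y x0" "q2 \<in> frechet_median_set M Y x0"
  shows "prob {\<omega> \<in> space M. Y \<omega> \<in> rays_beyond q1 q2} = 1"
proof -
  define m where "m = hmidpoint q1 q2"
  define gap where "gap \<omega> = ((dist (Y \<omega>) q1 - dist (Y \<omega>) m) + (dist (Y \<omega>) q2 - dist (Y \<omega>) m)) / 2" for \<omega>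
  have gap_nonneg: "0 \<le> gap \<omega>" for \<omega>
    unfolding gap_def m_def using dist_hmidpoint_le[OF hadamard, of "Y \<omega>" q1 q2] by simp
  have int_gap: "integrable M gap"
    unfolding gap_def using integrable_dist_diff[OF Y]
    by (intro integrable_divide Bochner_Integration.integrable_add)
  have "(\<integral>\<omega>. gap \<omega> \<partial>M)
      = ((frechet_fun M Y x0 q1 - frechet_fun M Y x0 m) + (frechet_fun M Y x0 q2 - frechet_fun M Y x0 m)) / 2"
    unfolding gap_def frechet_fun_diff[OF Y] integral_divide_zero
    by (simp only: Bochner_Integration.integral_add[OF integrable_dist_diff[OF Y] integrable_dist_diff[OF Y]])
  also have "\<dots> \<le> 0"
  proof -
    have "frechet_fun M Y x0 q1 \<le> frechet_fun M Y x0 m" "frechet_fun M Y x0 q2 \<le> frechet_fun M Y x0 m"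
      using assms unfolding frechet_median_set_altdef by blast+
    then show ?thesis
      by (intro divide_nonpos_pos add_nonpos_nonpos) auto
  qed
  finally have "(\<integral>\<omega>. gap \<omega> \<partial>M) \<le> 0" .
  moreover have "0 \<le> (\<integral>\<omega>. gap \<omega> \<partial>M)"
    using gap_nonneg by (simp add: Bochner_Integration.integral_nonneg)
  ultimately have "(\<integral>\<omega>. gap \<omega> \<partial>M) = 0"
    by linarith
  then have "AE \<omega> in M. gap \<omega> = 0"
    using integral_nonneg_eq_0_iff_AE[OF int_gap AE_I2[OF gap_nonneg]] by blast
  then have "AE \<omega> in M. \<omega> \<in> {\<omega> \<in> space M. Y \<omega> \<in> rays_beyond q1 q2}"
  proof (rule AE_mp, intro AE_I2 impI)
    fix \<omega> assume "\<omega> \<in> space M" "gap \<omega> = 0"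
    then have "dist (Y \<omega>) (hmidpoint q1 q2) = (dist (Y \<omega>) q1 + dist (Y \<omega>) q2) / 2"
      unfolding gap_def m_def by simp
    then show "\<omega> \<in> {\<omega> \<in> space M. Y \<omega> \<in> rays_beyond q1 q2}"
      using \<open>\<omega> \<in> space M\<close> abs_dist_diff_eq_if_dist_hmidpoint_eq[OF hadamard]
      unfolding rays_beyond_def by simp
  qed
  moreover have "{\<omega> \<in> space M. Y \<omega> \<in> rays_beyond q1 q2} \<in> events"
    using measurable_sets[OF Y borel_closed[OF closed_rays_beyond]]
    by (simp add: vimage_def Int_def conj_commute)
  ultimately show ?thesis
    using AE_in_set_eq_1 by blast
qed

lemma ex1_frechet_median_if_not_ae_rays_beyond:
  assumes "\<And>q1 q2. q1 \<noteq> q2 \<Longrightarrow> prob {\<omega> \<in> space M. Y \<omega> \<in> rays_beyond q1 q2} = 1 \<Longrightarrow> False"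
  shows "\<exists>!q. q \<in> frechet_median_set M Y x0"
proof -
  obtain q where q: "q \<in> frechet_median_set M Y x0"
    by (rule frechet_median_exists)
  then show ?thesis
  proof (rule ex1I)
    fix p assume p: "p \<in> frechet_median_set M Y x0"
    show "p = q"
      using assms[OF _ frechet_medians_ae_rays_beyond[OF p q]] by blast
  qed
qed

lemma ex1_frechet_median_if_no_geodesic_cover:
  assumes "\<nexists>U S (\<Gamma> :: (real set \<times> (real \<Rightarrow> 'b)) set).
             U \<in> sets borel \<and> prob {\<omega> \<in> space M. Y \<omega> \<in> U} = 1 \<and>
             geodesic_segment S \<and> diameter S > 0 \<and>
             (\<forall>(I, \<gamma>) \<in> \<Gamma>. geodesic I \<gamma> \<and> S \<subseteq> \<gamma> ` I) \<and>
             U \<subseteq> (\<Union>(I, \<gamma>) \<in> \<Gamma>. \<gamma> ` I)"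
  shows "\<exists>!q. q \<in> frechet_median_set M Y x0"
proof (rule ex1_frechet_median_if_not_ae_rays_beyond)
  fix q1 q2 :: 'b assume "q1 \<noteq> q2" and "prob {\<omega> \<in> space M. Y \<omega> \<in> rays_beyond q1 q2} = 1"
  moreover obtain S and \<Gamma> :: "(real set \<times> (real \<Rightarrow> 'b)) set"
    where "geodesic_segment S" "0 < diameter S" "\<forall>(I, \<gamma>) \<in> \<Gamma>. geodesic I \<gamma> \<and> S \<subseteq> \<gamma> ` I"
      "rays_beyond q1 q2 \<subseteq> (\<Union>(I, \<gamma>) \<in> \<Gamma>. \<gamma> ` I)"
    using rays_beyond_covered_by_geodesics[OF \<open>q1 \<noteq> q2\<close>] by blast
  ultimately have "rays_beyond q1 q2 \<in> sets borel \<and> prob {\<omega> \<in> space M. Y \<omega> \<in> rays_beyond q1 q2} = 1 \<and>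
      geodesic_segment S \<and> diameter S > 0 \<and> (\<forall>(I, \<gamma>) \<in> \<Gamma>. geodesic I \<gamma> \<and> S \<subseteq> \<gamma> ` I) \<and>
      rays_beyond q1 q2 \<subseteq> (\<Union>(I, \<gamma>) \<in> \<Gamma>. \<gamma> ` I)"
    by (intro conjI borel_closed closed_rays_beyond)
  then have "\<exists>U S (\<Gamma> :: (real set \<times> (real \<Rightarrow> 'b)) set).
             U \<in> sets borel \<and> prob {\<omega> \<in> space M. Y \<omega> \<in> U} = 1 \<and>
             geodesic_segment S \<and> diameter S > 0 \<and>
             (\<forall>(I, \<gamma>) \<in> \<Gamma>. geodesic I \<gamma> \<and> S \<subseteq> \<gamma> ` I) \<and>
             U \<subseteq> (\<Union>(I, \<gamma>) \<in> \<Gamma>. \<gamma> ` I)"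
    by (intro exI)
  with assms show False
    by (rule notE)
qed

lemma ex1_frechet_median_if_non_branching:
  assumes "non_branching TYPE('b)"
    and no_geodesic: "\<nexists>I \<gamma>. geodesic I \<gamma> \<and> prob {\<omega> \<in> space M. Y \<omega> \<in> \<gamma> ` I} = 1"
  shows "\<exists>!q. q \<in> frechet_median_set M Y x0"
proof (rule ex1_frechet_median_if_not_ae_rays_beyond)
  fix q1 q2 :: 'b assume "q1 \<noteq> q2" and "prob {\<omega> \<in> space M. Y \<omega> \<in> rays_beyond q1 q2} = 1"
  moreover obtain I \<gamma> where "geodesic I \<gamma>" "\<gamma> ` I = rays_beyond q1 q2"
    using rays_beyond_geodesic_image[OF hadamard assms(1) \<open>q1 \<noteq> q2\<close>] by blast
  ultimately have "geodesic I \<gamma> \<and> prob {\<omega> \<in> space M. Y \<omega> \<in> \<gamma> ` I} = 1"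
    by simp
  then have "\<exists>I \<gamma>. geodesic I \<gamma> \<and> prob {\<omega> \<in> space M. Y \<omega> \<in> \<gamma> ` I} = 1"
    by (intro exI)
  with no_geodesic show False
    by (rule notE)
qed

end

end

theorem mainTheorem11:
  fixes P :: "'m measure" and Y :: "'m \<Rightarrow> 'a::complete_space" and x0 :: 'a
  assumes "hadamard TYPE('a)"
    and "prob_space P"
    and "Y \<in> measurable P borel"
  shows "((\<nexists>U S (\<Gamma> :: (real set \<times> (real \<Rightarrow> 'a)) set).
             U \<in> sets borel \<and> prob_space.prob P {\<omega> \<in> space P. Y \<omega> \<in> U} = 1 \<and>
             geodesic_segment S \<and> diameter S > 0 \<and>
             (\<forall>(I, \<gamma>) \<in> \<Gamma>. geodesic I \<gamma> \<and> S \<subseteq> \<gamma> ` I) \<and>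
             U \<subseteq> (\<Union>(I, \<gamma>) \<in> \<Gamma>. \<gamma> ` I))
          \<longrightarrow> (\<exists>!q. q \<in> frechet_median_set P Y x0))
       \<and> ((non_branching TYPE('a) \<and>
            (\<nexists>I \<gamma>. geodesic I \<gamma> \<and> prob_space.prob P {\<omega> \<in> space P. Y \<omega> \<in> \<gamma> ` I} = 1))
          \<longrightarrow> (\<exists>!q. q \<in> frechet_median_set P Y x0))"
proof -
  interpret prob_space P by fact
  show ?thesis
    by (simp add: ex1_frechet_median_if_no_geodesic_cover[OF assms(1,3)]
        ex1_frechet_median_if_non_branching[OF assms(1,3)])
qed

end
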